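(* Let $k\ge0$, $n>2k$ and $\epsilon>0$. Fix any sequence $(s_{k,t})_{t=k+1}^{n-k}$ of maps $s_{k,t}:\mathcal Z^{2k+1}\to\hat{\mathcal X}$. Then for all $x^n\in\mathcal X^n$, $$\Pr\Big(L(x_{k+1}^{n-k},Z^n)-\tilde L(Z^n)>\epsilon\Big)\le(k+1)\exp\Big(-\frac{2(n-2k)\epsilon^2}{(k+1)L_{\max}^2}\Big)$$ and $$\Pr\Big(\tilde L(Z^n)-L(x_{k+1}^{n-k},Z^n)>\epsilon\Big)\le(k+1)\exp\Big(-\frac{2(n-2k)\epsilon^2}{(k+1)L_{\max}^2}\Big),$$ where $L(x_{k+1}^{n-k},z^n)=\frac1{n-2k}\sum_{t=k+1}^{n-k}\Lambda\big(x_t,s_{k,t}(z_{t-k}^{t+k})\big)$ and $\tilde L(z^n)=\frac1{n-2k}\sum_{t=k+1}^{n-k}\ell\big(z_t,s_{k,t}(\mathbf c_t,\cdot)\big)$.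
   Context: Let $\mathcal X,\mathcal Z,\hat{\mathcal X}$ be finite alphabets and $\Pi=\{\Pi(x,z)\}$ a $|\mathcal X|\times|\mathcal Z|$ stochastic matrix (discrete memoryless channel) of full row rank. For deterministic $x^n\in\mathcal X^n$, the channel output $Z^n$ has independent components with $\Pr(Z_t=z)=\Pi(x_t,z)$. Fix a loss $\Lambda:\mathcal X\times\hat{\mathcal X}\to[0,\infty)$, $\Lambda_{\max}=\max_{x,\hat x}\Lambda(x,\hat x)$. Let $\mathcal S$ be the set of all maps $s:\mathcal Z\to\hat{\mathcal X}$. Fix a real $|\mathcal Z|\times|\mathcal X|$ matrix $H$ with $\Pi H=I$; $h(z)\in\mathbb R^{\mathcal X}$ is the column vector equal to the $z$-th row of $H$. For $s\in\mathcal S$, $\rho_x(s)=\sum_z\Lambda(x,s(z))\Pi(x,z)$ and $\ell(z,s)=h(z)^T\rho(s)$. Let $\ell_{\max}=\max_{z,s}\ell(z,s)-\min_{z,s}\ell(z,s)$, $L_{\max}=\Lambda_{\max}+\ell_{\max}$. For $z^n$ and $k+1\le t\le n-k$, the context is $\mathbf c_t=(z_{t-k}^{t-1},z_{t+1}^{t+k})$, and $s_{k,t}(\mathbf c_t,\cdot)\in\mathcal S$ is the map $z\mapsto s_{k,t}(z_{t-k}^{t-1},z,z_{t+1}^{t+k})$. *)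

theory Defs
  imports "HOL-Probability.Probability"
begin

text \<open>Alphabets are finite types 'x (clean symbols), 'z (channel outputs), 'xh (reconstructions).
  The DMC Pi is given row-wise as pmfs: Pi(x,z) = pmf (Ch x) z.
  H is a |Z| x |X| real matrix, h(z) its z-th row.\<close>

definition rho :: "('x::finite \<Rightarrow> 'z::finite pmf) \<Rightarrow> ('x \<Rightarrow> 'xh \<Rightarrow> real) \<Rightarrow> ('z \<Rightarrow> 'xh) \<Rightarrow> 'x \<Rightarrow> real" where
  "rho Ch Lam s x = (\<Sum>z\<in>UNIV. Lam x (s z) * pmf (Ch x) z)"

definition ell :: "('x::finite \<Rightarrow> 'z::finite pmf) \<Rightarrow> ('z \<Rightarrow> 'x \<Rightarrow> real) \<Rightarrow> ('x \<Rightarrow> 'xh \<Rightarrow> real) \<Rightarrow> 'z \<Rightarrow> ('z \<Rightarrow> 'xh) \<Rightarrow> real" where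
  "ell Ch H Lam z s = (\<Sum>x\<in>UNIV. H z x * rho Ch Lam s x)"

definition Lambda_max :: "('x::finite \<Rightarrow> 'xh::finite \<Rightarrow> real) \<Rightarrow> real" where
  "Lambda_max Lam = Max {Lam x xh | x xh. True}"

definition ell_max :: "('x::finite \<Rightarrow> 'z::finite pmf) \<Rightarrow> ('z \<Rightarrow> 'x \<Rightarrow> real) \<Rightarrow> ('x \<Rightarrow> 'xh::finite \<Rightarrow> real) \<Rightarrow> real" where
  "ell_max Ch H Lam = Max {ell Ch H Lam z s | z s. True} - Min {ell Ch H Lam z s | z s. True}"

definition L_max :: "('x::finite \<Rightarrow> 'z::finite pmf) \<Rightarrow> ('z \<Rightarrow> 'x \<Rightarrow> real) \<Rightarrow> ('x \<Rightarrow> 'xh::finite \<Rightarrow> real) \<Rightarrow> real" where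
  "L_max Ch H Lam = Lambda_max Lam + ell_max Ch H Lam"

text \<open>Sequences x^n, z^n are functions on nat, indices 1..n. The sliding-window denoiser
  s t : Z^{2k+1} -> Xh is applied to the list [z_{t-k}, ..., z_{t+k}].\<close>

definition window :: "nat \<Rightarrow> nat \<Rightarrow> (nat \<Rightarrow> 'z) \<Rightarrow> 'z list" where
  "window k t zs = map zs [t - k..<t + k + 1]"

text \<open>s_{k,t}(c_t, .) : z |-> s_{k,t}(z_{t-k}^{t-1}, z, z_{t+1}^{t+k})\<close>
definition ctx_map :: "nat \<Rightarrow> nat \<Rightarrow> (nat \<Rightarrow> 'z list \<Rightarrow> 'xh) \<Rightarrow> (nat \<Rightarrow> 'z) \<Rightarrow> 'z \<Rightarrow> 'xh" where
  "ctx_map k t s zs = (\<lambda>z. s t (map zs [t - k..<t] @ [z] @ map zs [t + 1..<t + k + 1]))"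

definition L_true :: "nat \<Rightarrow> nat \<Rightarrow> ('x \<Rightarrow> 'xh \<Rightarrow> real) \<Rightarrow> (nat \<Rightarrow> 'z list \<Rightarrow> 'xh) \<Rightarrow> (nat \<Rightarrow> 'x) \<Rightarrow> (nat \<Rightarrow> 'z) \<Rightarrow> real" where
  "L_true n k Lam s xs zs =
     (1 / (real n - 2 * real k)) * (\<Sum>t = k + 1..n - k. Lam (xs t) (s t (window k t zs)))"

definition L_tilde :: "('x::finite \<Rightarrow> 'z::finite pmf) \<Rightarrow> ('z \<Rightarrow> 'x \<Rightarrow> real) \<Rightarrow> ('x \<Rightarrow> 'xh \<Rightarrow> real) \<Rightarrow> nat \<Rightarrow> nat \<Rightarrow> (nat \<Rightarrow> 'z list \<Rightarrow> 'xh) \<Rightarrow> (nat \<Rightarrow> 'z) \<Rightarrow> real" where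
  "L_tilde Ch H Lam n k s zs =
     (1 / (real n - 2 * real k)) * (\<Sum>t = k + 1..n - k. ell Ch H Lam (zs t) (ctx_map k t s zs))"

definition channel_out :: "('x \<Rightarrow> 'z pmf) \<Rightarrow> nat \<Rightarrow> (nat \<Rightarrow> 'x) \<Rightarrow> (nat \<Rightarrow> 'z) pmf" where
  "channel_out Ch n xs = Pi_pmf {1..n} undefined (\<lambda>t. Ch (xs t))"

end

theory Submission
  imports Defs
begin

text \<open>
  (n - 2k)(L - L~) is the sum over t of the loss gaps
  \<Lambda>(x_t, s_{k,t}(z_{t-k}^{t+k})) - \<ell>(z_t, s_{k,t}(c_t, \<cdot>)). Since \<Pi>H = I, \<ell>(Z, s) with
  Z ~ \<Pi>(x, \<cdot>) is an unbiased estimate of \<rho>_x(s), so each gap has mean zero over Z_t whatever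
  the other outputs are. The t-th gap depends only on the window Z_{t-k}^{t+k}, and the windows
  of a residue class of t modulo k + 1 meet the class only in their centres. Hence, conditionally
  on the outputs outside the class, the gaps of the class are independent, centred and confined
  to an interval of length L_max, and Hoeffding's inequality applies. A union bound over the
  k + 1 classes, with thresholds proportional to the square roots of the class sizes, gives the
  claimed bound.
\<close>

lemma map_pmf_pair_pmf_eq_bind:
  "map_pmf h (pair_pmf p q) = bind_pmf p (\<lambda>x. map_pmf (\<lambda>y. h (x, y)) q)"
  by (simp add: pair_pmf_def map_bind_pmf map_pmf_def bind_assoc_pmf bind_return_pmf)

lemma prob_Pi_pmf_sum_ge_le_Hoeffding:
  fixes W :: "'i \<Rightarrow> 'a \<Rightarrow> real"
  assumes "finite C" "C \<noteq> {}"
    and mean_zero: "\<And>t. t \<in> C \<Longrightarrow> measure_pmf.expectation (p t) (W t) = 0"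
    and bounded: "\<And>t z. t \<in> C \<Longrightarrow> W t z \<in> {a..b}"
    and "a < b" "\<tau> \<ge> 0"
  shows "measure_pmf.prob (Pi_pmf C d p) {f. \<tau> \<le> (\<Sum>t\<in>C. W t (f t))}
           \<le> exp (-2 * \<tau>\<^sup>2 / (real (card C) * (b - a)\<^sup>2))"
proof -
  let ?Q = "Pi_pmf C d p"
  interpret Hoeffding_ineq "measure_pmf ?Q" C "\<lambda>t f. W t (f t)" "\<lambda>_. a" "\<lambda>_. b" 0
  proof unfold_locales
    show "prob_space.indep_vars (measure_pmf ?Q) (\<lambda>_. borel) (\<lambda>t f. W t (f t)) C"
      by (rule prob_space.indep_vars_compose2[OF _ indep_vars_Pi_pmf[OF \<open>finite C\<close>]])
        (auto simp: measure_pmf.prob_space_axioms)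
    have "measure_pmf.expectation ?Q (\<lambda>f. W t (f t)) = 0" if "t \<in> C" for t
    proof -
      have "measure_pmf.expectation ?Q (\<lambda>f. W t (f t))
          = measure_pmf.expectation (map_pmf (\<lambda>f. f t) ?Q) (W t)" by simp
      also have "map_pmf (\<lambda>f. f t) ?Q = p t"
        by (subst Pi_pmf_component) (use \<open>finite C\<close> that in auto)
      finally show ?thesis using mean_zero[OF that] by simp
    qed
    then show "0 \<equiv> \<Sum>t\<in>C. measure_pmf.expectation ?Q (\<lambda>f. W t (f t))" by simp
  qed (use assms in auto)
  have "(\<Sum>t\<in>C. (b - a)\<^sup>2) > 0"
    using assms(1,2,5) by (simp add: card_gt_0_iff)
  from Hoeffding_ineq_ge[OF \<open>\<tau> \<ge> 0\<close> this] show ?thesis by simp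
qed

lemma prob_Pi_pmf_sum_ge_le_local:
  fixes Y :: "'i \<Rightarrow> ('i \<Rightarrow> 'a) \<Rightarrow> real"
  assumes "finite I" "C \<subseteq> I" "C \<noteq> {}"
    and local: "\<And>t f g. t \<in> C \<Longrightarrow> (\<And>i. i \<in> (I - C) \<union> {t} \<Longrightarrow> f i = g i) \<Longrightarrow> Y t f = Y t g"
    and mean_zero: "\<And>t g. t \<in> C \<Longrightarrow> measure_pmf.expectation (p t) (\<lambda>z. Y t (g(t := z))) = 0"
    and bounded: "\<And>t f. t \<in> C \<Longrightarrow> Y t f \<in> {a..b}"
    and "a < b" "\<tau> \<ge> 0"
  shows "measure_pmf.prob (Pi_pmf I d p) {f. \<tau> \<le> (\<Sum>t\<in>C. Y t f)}
           \<le> exp (-2 * \<tau>\<^sup>2 / (real (card C) * (b - a)\<^sup>2))"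
proof -
  define A where "A = I - C"
  define merge :: "('i \<Rightarrow> 'a) \<Rightarrow> ('i \<Rightarrow> 'a) \<Rightarrow> 'i \<Rightarrow> 'a"
    where "merge = (\<lambda>g f i. if i \<in> A then g i else f i)"
  let ?E = "{f. \<tau> \<le> (\<Sum>t\<in>C. Y t f)}"
  let ?B = "exp (-2 * \<tau>\<^sup>2 / (real (card C) * (b - a)\<^sup>2))"
  \<comment> \<open>condition on the coordinates outside C\<close>
  have "finite C" "finite A" using assms(1,2) finite_subset by (auto simp: A_def)
  moreover have "I = A \<union> C" "A \<inter> C = {}" using assms(2) by (auto simp: A_def)
  ultimately have split: "Pi_pmf I d p = bind_pmf (Pi_pmf A d p) (\<lambda>g. map_pmf (merge g) (Pi_pmf C d p))"
    by (simp only: Pi_pmf_union map_pmf_pair_pmf_eq_bind merge_def prod.case)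
  have conditional: "measure_pmf.prob (map_pmf (merge g) (Pi_pmf C d p)) ?E \<le> ?B" for g
  proof -
    have "Y t (merge g f) = Y t (g(t := f t))" if "t \<in> C" for t f
      using that by (intro local) (auto simp: A_def merge_def)
    then have "merge g -` ?E = {f. \<tau> \<le> (\<Sum>t\<in>C. Y t (g(t := f t)))}"
      by (simp cong: sum.cong)
    then have "measure_pmf.prob (map_pmf (merge g) (Pi_pmf C d p)) ?E
        = measure_pmf.prob (Pi_pmf C d p) {f. \<tau> \<le> (\<Sum>t\<in>C. Y t (g(t := f t)))}"
      by (simp only: measure_map_pmf)
    also have "\<dots> \<le> ?B"
      by (rule prob_Pi_pmf_sum_ge_le_Hoeffding[where W = "\<lambda>t z. Y t (g(t := z))"])
        (use \<open>finite C\<close> \<open>C \<noteq> {}\<close> mean_zero bounded \<open>a < b\<close> \<open>\<tau> \<ge> 0\<close> in blast)+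
    finally show ?thesis .
  qed
  have "emeasure (Pi_pmf I d p) ?E = (\<integral>\<^sup>+g. emeasure (map_pmf (merge g) (Pi_pmf C d p)) ?E \<partial>Pi_pmf A d p)"
    unfolding split by simp
  also have "\<dots> \<le> (\<integral>\<^sup>+g. ennreal ?B \<partial>Pi_pmf A d p)"
    by (intro nn_integral_mono) (use conditional in \<open>auto simp: measure_pmf.emeasure_eq_measure\<close>)
  also have "\<dots> = ennreal ?B" by simp
  finally show ?thesis by (simp add: measure_pmf.emeasure_eq_measure)
qed

lemma prob_sum_gt_le_blocks:
  fixes X :: "'t \<Rightarrow> 'a \<Rightarrow> real" and cls :: "'t \<Rightarrow> 'r"
  assumes "finite T" "finite R" "cls ` T \<subseteq> R" "\<epsilon> \<ge> 0"
    and block: "\<And>r \<tau>. r \<in> R \<Longrightarrow> {t\<in>T. cls t = r} \<noteq> {} \<Longrightarrow> \<tau> \<ge> 0 \<Longrightarrow>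
      measure_pmf.prob P {\<omega>. \<tau> \<le> (\<Sum>t\<in>{t\<in>T. cls t = r}. X t \<omega>)}
        \<le> exp (-2 * \<tau>\<^sup>2 / (real (card {t\<in>T. cls t = r}) * v))"
  shows "measure_pmf.prob P {\<omega>. real (card T) * \<epsilon> < (\<Sum>t\<in>T. X t \<omega>)}
           \<le> real (card R) * exp (- (2 * real (card T) * \<epsilon>\<^sup>2) / (real (card R) * v))"
proof -
  define N where "N = real (card T)"
  define B where "B = (\<lambda>r. {t\<in>T. cls t = r})"
  define m where "m = (\<lambda>r. real (card (B r)))"
  \<comment> \<open>by AM-GM these thresholds sum to at most N\<epsilon>, and every block gets the same exponent\<close>
  define \<tau> where "\<tau> = (\<lambda>r. sqrt (m r * (N / real (card R))) * \<epsilon>)"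
  define E where "E = exp (- (2 * N * \<epsilon>\<^sup>2) / (real (card R) * v))"
  have sum_blocks: "(\<Sum>r\<in>R. \<Sum>t\<in>B r. f t) = (\<Sum>t\<in>T. f t)" for f :: "'t \<Rightarrow> real"
    unfolding B_def by (rule sum.group) (use assms(1-3) in auto)
  have m_nonneg: "m r \<ge> 0" for r by (simp add: m_def)
  have "(\<Sum>r\<in>R. \<tau> r) \<le> (\<Sum>r\<in>R. (m r + N / real (card R)) / 2 * \<epsilon>)"
    unfolding \<tau>_def using m_nonneg \<open>\<epsilon> \<ge> 0\<close>
    by (intro sum_mono mult_right_mono arith_geo_mean_sqrt) (auto simp: N_def)
  also have "\<dots> = ((\<Sum>r\<in>R. m r) + real (card R) * (N / real (card R))) / 2 * \<epsilon>"
    by (simp add: sum_distrib_right[symmetric] sum_divide_distrib[symmetric] sum.distrib)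
  also have "(\<Sum>r\<in>R. m r) = N"
    using sum_blocks[of "\<lambda>_. 1"] by (simp add: m_def N_def)
  also have "real (card R) * (N / real (card R)) = N"
    using assms(1-3) by (cases "R = {}") (auto simp: N_def)
  finally have sum_\<tau>: "(\<Sum>r\<in>R. \<tau> r) \<le> N * \<epsilon>" by simp
  have cover: "{\<omega>. N * \<epsilon> < (\<Sum>t\<in>T. X t \<omega>)} \<subseteq> (\<Union>r\<in>R. {\<omega>. \<tau> r < (\<Sum>t\<in>B r. X t \<omega>)})"
  proof (rule subsetI, rule ccontr)
    fix \<omega>
    assume "\<omega> \<in> {\<omega>. N * \<epsilon> < (\<Sum>t\<in>T. X t \<omega>)}"
      and "\<omega> \<notin> (\<Union>r\<in>R. {\<omega>. \<tau> r < (\<Sum>t\<in>B r. X t \<omega>)})"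
    then have "N * \<epsilon> < (\<Sum>r\<in>R. \<Sum>t\<in>B r. X t \<omega>)"
      and "\<forall>r\<in>R. (\<Sum>t\<in>B r. X t \<omega>) \<le> \<tau> r"
      by (auto simp: sum_blocks not_less)
    then show False using sum_mono[of R "\<lambda>r. \<Sum>t\<in>B r. X t \<omega>" \<tau>] sum_\<tau> by simp
  qed
  have \<tau>_nonneg: "\<tau> r \<ge> 0" for r
    unfolding \<tau>_def using m_nonneg \<open>\<epsilon> \<ge> 0\<close> by (simp add: N_def)
  have each: "measure_pmf.prob P {\<omega>. \<tau> r < (\<Sum>t\<in>B r. X t \<omega>)} \<le> E" if "r \<in> R" for r
  proof (cases "B r = {}")
    case True
    then show ?thesis by (simp add: \<tau>_def m_def E_def)
  next
    case False
    then have "m r > 0" using assms(1) by (simp add: m_def B_def card_gt_0_iff)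
    have "measure_pmf.prob P {\<omega>. \<tau> r < (\<Sum>t\<in>B r. X t \<omega>)} \<le> measure_pmf.prob P {\<omega>. \<tau> r \<le> (\<Sum>t\<in>B r. X t \<omega>)}"
      by (intro measure_pmf.finite_measure_mono) auto
    also have "\<dots> \<le> exp (-2 * (\<tau> r)\<^sup>2 / (m r * v))"
      using block[OF that _ \<tau>_nonneg] False by (simp add: B_def m_def)
    also have "-2 * (\<tau> r)\<^sup>2 / (m r * v) = - (2 * N * \<epsilon>\<^sup>2) / (real (card R) * v)"
      using \<open>m r > 0\<close> \<open>\<epsilon> \<ge> 0\<close>
      by (simp add: \<tau>_def power_mult_distrib N_def)
    finally show ?thesis unfolding E_def .
  qed
  have "measure_pmf.prob P {\<omega>. N * \<epsilon> < (\<Sum>t\<in>T. X t \<omega>)}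
      \<le> measure_pmf.prob P (\<Union>r\<in>R. {\<omega>. \<tau> r < (\<Sum>t\<in>B r. X t \<omega>)})"
    by (intro measure_pmf.finite_measure_mono cover) auto
  also have "\<dots> \<le> (\<Sum>r\<in>R. measure_pmf.prob P {\<omega>. \<tau> r < (\<Sum>t\<in>B r. X t \<omega>)})"
    by (intro measure_pmf.finite_measure_subadditive_finite) (auto simp: assms(2))
  also have "\<dots> \<le> (\<Sum>r\<in>R. E)" by (intro sum_mono each)
  finally show ?thesis by (simp add: N_def E_def)
qed

lemma mod_eq_imp_far:
  fixes i t k :: nat
  assumes "i mod (k + 1) = t mod (k + 1)" "i \<noteq> t"
  shows "i + k < t \<or> t + k < i"
proof -
  have "k + 1 \<le> v - u" if "u mod (k + 1) = v mod (k + 1)" "u < v" for u v :: nat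
  proof (rule dvd_imp_le)
    show "k + 1 dvd v - u" using that mod_eq_dvd_iff_nat[of u v "k + 1"] by simp
  qed (use that in simp)
  from this[of i t] this[of t i] assms show ?thesis by (cases "i < t") auto
qed

lemma expectation_pmf_finite:
  fixes p :: "'z::finite pmf"
  shows "measure_pmf.expectation p f = (\<Sum>z\<in>UNIV. f z * pmf p z)"
  by (rule integral_measure_pmf_real) auto

lemma rho_eq_expectation: "rho Ch Lam \<sigma> x = measure_pmf.expectation (Ch x) (\<lambda>z. Lam x (\<sigma> z))"
  by (simp add: rho_def expectation_pmf_finite)

lemma expectation_ell_eq_rho:
  fixes Ch :: "'x::finite \<Rightarrow> 'z::finite pmf"
  assumes right_inv: "\<And>x x'. (\<Sum>z\<in>UNIV. pmf (Ch x) z * H z x') = (if x = x' then 1 else 0)"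
  shows "measure_pmf.expectation (Ch x) (\<lambda>z. ell Ch H Lam z \<sigma>) = rho Ch Lam \<sigma> x"
proof -
  have "measure_pmf.expectation (Ch x) (\<lambda>z. ell Ch H Lam z \<sigma>)
      = (\<Sum>x'\<in>UNIV. (\<Sum>z\<in>UNIV. pmf (Ch x) z * H z x') * rho Ch Lam \<sigma> x')"
    unfolding expectation_pmf_finite ell_def
    by (simp add: sum_distrib_left sum_distrib_right mult_ac) (rule sum.swap)
  also have "\<dots> = (\<Sum>x'\<in>UNIV. if x = x' then rho Ch Lam \<sigma> x' else 0)"
    by (intro sum.cong) (auto simp: right_inv)
  also have "\<dots> = rho Ch Lam \<sigma> x" by simp
  finally show ?thesis .
qed

definition loss_gap :: "('x::finite \<Rightarrow> 'z::finite pmf) \<Rightarrow> ('z \<Rightarrow> 'x \<Rightarrow> real) \<Rightarrow> ('x \<Rightarrow> 'xh \<Rightarrow> real)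
    \<Rightarrow> (nat \<Rightarrow> 'z list \<Rightarrow> 'xh) \<Rightarrow> (nat \<Rightarrow> 'x) \<Rightarrow> nat \<Rightarrow> nat \<Rightarrow> (nat \<Rightarrow> 'z) \<Rightarrow> real" where
  "loss_gap Ch H Lam s xs k t zs =
     Lam (xs t) (s t (window k t zs)) - ell Ch H Lam (zs t) (ctx_map k t s zs)"

lemma loss_gap_cong:
  assumes "\<And>i. t - k \<le> i \<Longrightarrow> i \<le> t + k \<Longrightarrow> zs i = zs' i"
  shows "loss_gap Ch H Lam s xs k t zs = loss_gap Ch H Lam s xs k t zs'"
proof -
  have "window k t zs = window k t zs'"
    unfolding window_def by (intro map_cong) (auto intro: assms)
  moreover have "ctx_map k t s zs = ctx_map k t s zs'"
    unfolding ctx_map_def by (intro ext arg_cong[where f = "s t"]) (auto intro!: map_cong assms)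
  moreover have "zs t = zs' t" by (rule assms) auto
  ultimately show ?thesis by (simp add: loss_gap_def)
qed

lemma window_fun_upd:
  assumes "k \<le> t"
  shows "s t (window k t (g(t := z))) = ctx_map k t s g z"
proof -
  have "[t - k..<t + (k + 1)] = [t - k..<t] @ [t..<t + (k + 1)]"
    using assms by (intro upt_add_eq_append) simp
  moreover have "[t..<t + (k + 1)] = t # [t + 1..<t + (k + 1)]"
    by (simp add: upt_conv_Cons)
  ultimately have "[t - k..<t + k + 1] = [t - k..<t] @ [t] @ [t + 1..<t + k + 1]"
    by simp
  then show ?thesis
    unfolding window_def ctx_map_def by (auto intro!: arg_cong[where f = "s t"] map_cong)
qed

lemma ctx_map_fun_upd: "ctx_map k t s (g(t := z)) = ctx_map k t s g"
  unfolding ctx_map_def by (auto intro!: ext arg_cong[where f = "s t"] map_cong)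

lemma loss_gap_fun_upd:
  assumes "k \<le> t"
  shows "loss_gap Ch H Lam s xs k t (g(t := z))
           = Lam (xs t) (ctx_map k t s g z) - ell Ch H Lam z (ctx_map k t s g)"
  by (simp only: loss_gap_def window_fun_upd[OF assms] ctx_map_fun_upd fun_upd_same)

lemma expectation_loss_gap_fun_upd:
  fixes Ch :: "'x::finite \<Rightarrow> 'z::finite pmf"
  assumes right_inv: "\<And>x x'. (\<Sum>z\<in>UNIV. pmf (Ch x) z * H z x') = (if x = x' then 1 else 0)"
    and "k \<le> t"
  shows "measure_pmf.expectation (Ch (xs t)) (\<lambda>z. loss_gap Ch H Lam s xs k t (g(t := z))) = 0"
proof -
  let ?\<sigma> = "ctx_map k t s g"
  have "measure_pmf.expectation (Ch (xs t)) (\<lambda>z. loss_gap Ch H Lam s xs k t (g(t := z)))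
      = measure_pmf.expectation (Ch (xs t)) (\<lambda>z. Lam (xs t) (?\<sigma> z))
        - measure_pmf.expectation (Ch (xs t)) (\<lambda>z. ell Ch H Lam z ?\<sigma>)"
    by (simp add: loss_gap_fun_upd[OF \<open>k \<le> t\<close>] expectation_pmf_finite sum_subtractf left_diff_distrib)
  also have "\<dots> = 0"
    by (simp only: expectation_ell_eq_rho[OF right_inv] rho_eq_expectation diff_self)
  finally show ?thesis .
qed

lemma loss_gap_cong_residue_class:
  assumes "t \<in> {k + 1..n - k}"
    and agree: "\<And>i. i \<in> ({1..n} - {t' \<in> {k + 1..n - k}. t' mod (k + 1) = t mod (k + 1)}) \<union> {t}
      \<Longrightarrow> f i = g i"
  shows "loss_gap Ch H Lam s xs k t f = loss_gap Ch H Lam s xs k t g"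
proof (rule loss_gap_cong, rule agree)
  fix i assume "t - k \<le> i" "i \<le> t + k"
  have "i mod (k + 1) \<noteq> t mod (k + 1)" if "i \<noteq> t"
    using mod_eq_imp_far[of i k t] that \<open>t - k \<le> i\<close> \<open>i \<le> t + k\<close> by linarith
  then show "i \<in> ({1..n} - {t' \<in> {k + 1..n - k}. t' mod (k + 1) = t mod (k + 1)}) \<union> {t}"
    using assms(1) \<open>t - k \<le> i\<close> \<open>i \<le> t + k\<close> by auto
qed

lemma prob_sum_loss_gap_gt:
  fixes Ch :: "'x::finite \<Rightarrow> 'z::finite pmf"
  assumes right_inv: "\<And>x x'. (\<Sum>z\<in>UNIV. pmf (Ch x) z * H z x') = (if x = x' then 1 else 0)"
    and "n > 2 * k" "\<epsilon> \<ge> 0"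
    and bounded: "\<And>t zs. c * loss_gap Ch H Lam s xs k t zs \<in> {a..b}" and "a \<le> b"
  shows "measure_pmf.prob (channel_out Ch n xs)
           {zs. (real n - 2 * real k) * \<epsilon> < (\<Sum>t = k + 1..n - k. c * loss_gap Ch H Lam s xs k t zs)}
         \<le> real (k + 1) * exp (- (2 * (real n - 2 * real k) * \<epsilon>\<^sup>2) / (real (k + 1) * (b - a)\<^sup>2))"
proof (cases "a = b")
  case True
  \<comment> \<open>the exponent divides by zero, so the right-hand side is k + 1\<close>
  have "measure_pmf.prob (channel_out Ch n xs) A \<le> 1 + real k" for A
    using measure_pmf.prob_le_1[of "channel_out Ch n xs" A] by linarith
  with True show ?thesis by simp
next
  case False
  let ?T = "{k + 1..n - k}"
  let ?Y = "\<lambda>t zs. c * loss_gap Ch H Lam s xs k t zs"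
  have "measure_pmf.prob (channel_out Ch n xs) {zs. real (card ?T) * \<epsilon> < (\<Sum>t\<in>?T. ?Y t zs)}
      \<le> real (card {..<k + 1})
         * exp (- (2 * real (card ?T) * \<epsilon>\<^sup>2) / (real (card {..<k + 1}) * (b - a)\<^sup>2))"
  proof (rule prob_sum_gt_le_blocks[where cls = "\<lambda>t. t mod (k + 1)"])
    fix r :: nat and \<tau> :: real
    assume nonempty: "{t \<in> ?T. t mod (k + 1) = r} \<noteq> {}" and "\<tau> \<ge> 0"
    define C where "C = {t \<in> ?T. t mod (k + 1) = r}"
    have local: "?Y t f = ?Y t g"
      if "t \<in> C" and agree: "\<And>i. i \<in> ({1..n} - C) \<union> {t} \<Longrightarrow> f i = g i" for t f g
    proof -
      have "loss_gap Ch H Lam s xs k t f = loss_gap Ch H Lam s xs k t g"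
      proof (rule loss_gap_cong_residue_class)
        show "t \<in> ?T" using \<open>t \<in> C\<close> by (simp add: C_def)
        have "{t' \<in> ?T. t' mod (k + 1) = t mod (k + 1)} = C" using \<open>t \<in> C\<close> by (auto simp: C_def)
        then show "f i = g i" if "i \<in> ({1..n} - {t' \<in> ?T. t' mod (k + 1) = t mod (k + 1)}) \<union> {t}" for i
          using agree that by simp
      qed
      then show ?thesis by simp
    qed
    have mean_zero: "measure_pmf.expectation (Ch (xs t)) (\<lambda>z. ?Y t (g(t := z))) = 0"
      if "t \<in> C" for t g
    proof -
      have "k \<le> t" using that by (simp add: C_def)
      then have "measure_pmf.expectation (Ch (xs t)) (\<lambda>z. loss_gap Ch H Lam s xs k t (g(t := z))) = 0"
        by (rule expectation_loss_gap_fun_upd[OF right_inv])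
      then show ?thesis by simp
    qed
    show "measure_pmf.prob (channel_out Ch n xs) {zs. \<tau> \<le> (\<Sum>t\<in>{t \<in> ?T. t mod (k + 1) = r}. ?Y t zs)}
        \<le> exp (-2 * \<tau>\<^sup>2 / (real (card {t \<in> ?T. t mod (k + 1) = r}) * (b - a)\<^sup>2))"
      unfolding channel_out_def C_def[symmetric]
      by (rule prob_Pi_pmf_sum_ge_le_local[OF _ _ _ local mean_zero])
        (use bounded nonempty False \<open>a \<le> b\<close> \<open>\<tau> \<ge> 0\<close> in \<open>auto simp: C_def\<close>)
  qed (use \<open>\<epsilon> \<ge> 0\<close> in auto)
  moreover have "real (card ?T) = real n - 2 * real k"
    using \<open>n > 2 * k\<close> by (simp add: of_nat_diff)
  ultimately show ?thesis by simp
qed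

lemma Lam_le_Lambda_max:
  fixes Lam :: "'x::finite \<Rightarrow> 'xh::finite \<Rightarrow> real"
  shows "Lam x xh \<le> Lambda_max Lam"
proof -
  have "{Lam x xh | x xh. True} = case_prod Lam ` UNIV" by auto
  then show ?thesis unfolding Lambda_max_def by (intro Max_ge) auto
qed

lemma ell_bounds:
  fixes Ch :: "'x::finite \<Rightarrow> 'z::finite pmf" and Lam :: "'x \<Rightarrow> 'xh::finite \<Rightarrow> real"
  shows "Min {ell Ch H Lam z' \<sigma>' | z' \<sigma>'. True} \<le> ell Ch H Lam z \<sigma>"
    and "ell Ch H Lam z \<sigma> \<le> Max {ell Ch H Lam z' \<sigma>' | z' \<sigma>'. True}"
proof -
  have "{ell Ch H Lam z' \<sigma>' | z' \<sigma>'. True} = case_prod (ell Ch H Lam) ` UNIV" by auto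
  then show "Min {ell Ch H Lam z' \<sigma>' | z' \<sigma>'. True} \<le> ell Ch H Lam z \<sigma>"
    and "ell Ch H Lam z \<sigma> \<le> Max {ell Ch H Lam z' \<sigma>' | z' \<sigma>'. True}"
    by (auto intro!: Min_le Max_ge)
qed

lemma loss_gap_bounds:
  fixes Ch :: "'x::finite \<Rightarrow> 'z::finite pmf" and Lam :: "'x \<Rightarrow> 'xh::finite \<Rightarrow> real"
  assumes "\<And>x xh. Lam x xh \<ge> 0"
  shows "loss_gap Ch H Lam s xs k t zs
           \<in> {- Max {ell Ch H Lam z \<sigma> | z \<sigma>. True}..Lambda_max Lam - Min {ell Ch H Lam z \<sigma> | z \<sigma>. True}}"
  using assms[of "xs t" "s t (window k t zs)"] Lam_le_Lambda_max[of Lam "xs t" "s t (window k t zs)"]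
    ell_bounds[of Ch H Lam "zs t" "ctx_map k t s zs"]
  by (simp add: loss_gap_def)

lemma L_true_minus_L_tilde:
  "L_true n k Lam s xs zs - L_tilde Ch H Lam n k s zs
     = (\<Sum>t = k + 1..n - k. loss_gap Ch H Lam s xs k t zs) / (real n - 2 * real k)"
  unfolding L_true_def L_tilde_def loss_gap_def by (simp add: sum_subtractf diff_divide_distrib)

lemma prob_L_diff_gt:
  fixes Ch :: "'x::finite \<Rightarrow> 'z::finite pmf"
  assumes right_inv: "\<And>x x'. (\<Sum>z\<in>UNIV. pmf (Ch x) z * H z x') = (if x = x' then 1 else 0)"
    and "n > 2 * k" "\<epsilon> \<ge> 0"
    and "\<And>t zs. c * loss_gap Ch H Lam s xs k t zs \<in> {a..b}" and "a \<le> b"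
  shows "measure_pmf.prob (channel_out Ch n xs)
           {zs. c * (L_true n k Lam s xs zs - L_tilde Ch H Lam n k s zs) > \<epsilon>}
         \<le> real (k + 1) * exp (- (2 * (real n - 2 * real k) * \<epsilon>\<^sup>2) / (real (k + 1) * (b - a)\<^sup>2))"
proof -
  have "real n - 2 * real k > 0" using \<open>n > 2 * k\<close> by simp
  then have "{zs. c * (L_true n k Lam s xs zs - L_tilde Ch H Lam n k s zs) > \<epsilon>}
      = {zs. (real n - 2 * real k) * \<epsilon> < (\<Sum>t = k + 1..n - k. c * loss_gap Ch H Lam s xs k t zs)}"
    by (simp add: L_true_minus_L_tilde pos_less_divide_eq times_divide_eq_right sum_distrib_left
        mult.commute)
  then show ?thesis using prob_sum_loss_gap_gt[OF assms] by simp
qed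

theorem lemma2:
  fixes Ch :: "'x::finite \<Rightarrow> 'z::finite pmf"
    and H :: "'z \<Rightarrow> 'x \<Rightarrow> real"
    and Lam :: "'x \<Rightarrow> 'xh::finite \<Rightarrow> real"
    and s :: "nat \<Rightarrow> 'z list \<Rightarrow> 'xh"
    and k n :: nat and \<epsilon> :: real
    and xs :: "nat \<Rightarrow> 'x"
  assumes full_rank: "\<And>c :: 'x \<Rightarrow> real. (\<forall>z. (\<Sum>x\<in>UNIV. c x * pmf (Ch x) z) = 0) \<Longrightarrow> c = (\<lambda>_. 0)"
    and right_inv: "\<And>x x'. (\<Sum>z\<in>UNIV. pmf (Ch x) z * H z x') = (if x = x' then 1 else 0)"
    and Lam_nonneg: "\<And>x xh. Lam x xh \<ge> 0"
    and n_gt: "n > 2 * k"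
    and eps_pos: "\<epsilon> > 0"
  shows "measure_pmf.prob (channel_out Ch n xs)
           {zs. L_true n k Lam s xs zs - L_tilde Ch H Lam n k s zs > \<epsilon>}
         \<le> real (k + 1) * exp (- (2 * (real n - 2 * real k) * \<epsilon>\<^sup>2) / (real (k + 1) * (L_max Ch H Lam)\<^sup>2))
       \<and> measure_pmf.prob (channel_out Ch n xs)
           {zs. L_tilde Ch H Lam n k s zs - L_true n k Lam s xs zs > \<epsilon>}
         \<le> real (k + 1) * exp (- (2 * (real n - 2 * real k) * \<epsilon>\<^sup>2) / (real (k + 1) * (L_max Ch H Lam)\<^sup>2))"
proof -
  define lo where "lo = Min {ell Ch H Lam z \<sigma> | z \<sigma>. True}"
  define hi where "hi = Max {ell Ch H Lam z \<sigma> | z \<sigma>. True}"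
  have gap: "loss_gap Ch H Lam s xs k t zs \<in> {- hi..Lambda_max Lam - lo}" for t zs
    unfolding lo_def hi_def by (rule loss_gap_bounds[OF Lam_nonneg])
  then have "- hi \<le> Lambda_max Lam - lo" by (meson atLeastAtMost_iff order_trans)
  have gap_neg: "-1 * loss_gap Ch H Lam s xs k t zs \<in> {lo - Lambda_max Lam..hi}" for t zs
    using gap[of t zs] by auto
  have L_max: "L_max Ch H Lam = (Lambda_max Lam - lo) - (- hi)"
    "L_max Ch H Lam = hi - (lo - Lambda_max Lam)"
    by (simp_all add: L_max_def ell_max_def lo_def hi_def)
  have "measure_pmf.prob (channel_out Ch n xs)
      {zs. 1 * (L_true n k Lam s xs zs - L_tilde Ch H Lam n k s zs) > \<epsilon>}
      \<le> real (k + 1) * exp (- (2 * (real n - 2 * real k) * \<epsilon>\<^sup>2) / (real (k + 1) * (L_max Ch H Lam)\<^sup>2))"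
    unfolding L_max(1)
    using gap \<open>- hi \<le> Lambda_max Lam - lo\<close> eps_pos by (intro prob_L_diff_gt[OF right_inv n_gt]) auto
  moreover have "measure_pmf.prob (channel_out Ch n xs)
      {zs. -1 * (L_true n k Lam s xs zs - L_tilde Ch H Lam n k s zs) > \<epsilon>}
      \<le> real (k + 1) * exp (- (2 * (real n - 2 * real k) * \<epsilon>\<^sup>2) / (real (k + 1) * (L_max Ch H Lam)\<^sup>2))"
    unfolding L_max(2)
    using gap_neg \<open>- hi \<le> Lambda_max Lam - lo\<close> eps_pos by (intro prob_L_diff_gt[OF right_inv n_gt]) auto
  ultimately show ?thesis by simp
qed

end
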